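(* If $(H,d,\mu,\Delta)$ is a DG bialgebra and $\mu_{1}^{n}\in Hom^{2-n}(H^{\otimes n},H)$, $n\geq 3$, is a 2-cocycle in the Gerstenhaber–Schack complex (i.e. $D(\mu_1^n)=0$), then $(H[[t]],d,\mu,\Delta,t\mu_{1}^{n})$ is a linear deformation of $H_{0}=(H[[t]],d,\mu,\Delta)$ as a Hopf $A(n)$-algebra.
   Context: Let $\mathbf{k}$ be a field and $(H,d,\mu,\Delta)$ a connected DG bialgebra over $\mathbf{k}$ with $|d|=1$. Extending $d,\mu,\Delta$ $\mathbf{k}[[t]]$-linearly gives the $\mathbf{k}[[t]]$-DG bialgebra $H_0=(H[[t]],d,\mu,\Delta)$. Let $\sigma_{r,s}:(H^{\otimes r})^{\otimes s}\to (H^{\otimes s})^{\otimes r}$ be the canonical permutation of tensor factors. The (graded) Gerstenhaber–Schack cochains are $C^r_{GS}(H,H)=\bigoplus_{p+i+j=r+1}Hom^p(H^{\otimes i},H^{\otimes j})$, where $H^{\otimes i}$ carries the bicomodule structure induced by $\mu,\Delta$ and $H^{\otimes j}$ the bimodule structure; the total differential on $f$ of tridegree $(p,i,j)$ is $D(f)=[(-1)^{i+j}d+\partial+(-1)^i\delta](f)$ with $d(f)=d_{(j)}f-(-1)^p f d_{(i)}$, $\partial(f)=\lambda^j(1\otimes f)-f\partial_{(i)}-(-1)^i\rho^j(f\otimes 1)$, $\delta(f)=(1\otimes f)\lambda_i-\delta_{(j)}f-(-1)^j(f\otimes 1)\rho_i$, where $d_{(k)}=\sum_i 1^{\otimes i}\otimes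 d\otimes 1^{\otimes k-i-1}$, $\partial_{(k)}=\sum_i(-1)^i 1^{\otimes i}\otimes\mu\otimes 1^{\otimes k-i-1}$, $\delta_{(k)}=\sum_i(-1)^i1^{\otimes i}\otimes\Delta\otimes1^{\otimes k-i-1}$, and $\lambda_i,\rho_i$ (resp. $\lambda^j,\rho^j$) are the left/right coactions (resp. actions) on the tensor powers. A 2-cocycle is an element of total degree 2 with $D=0$. For $n\geq 3$, a Hopf $A(n)$-algebra is a tuple $(H,d,\mu,\Delta,\mu^n)$ such that (1) $(H,d,\Delta)$ is a coassociative DG coalgebra; (2) $(H,d,\mu,\mu^n)$ is an $A(n)$-algebra, i.e. with $\mu^1=d$, $\mu^2=\mu$, $\mu^n$ and all other $\mu^k=0$ ($\mu^k\in Hom^{2-k}(H^{\otimes k},H)$) one has $\sum_{j=0}^{k-1}\sum_{i=0}^{k-j-1}(-1)^{j(i+1)}\mu^{k-j}(1^{\otimes i}\otimes\mu^{j+1}\otimes 1^{\otimes k-j-1-i})=0$ for each $k<n+1$; and (3) $\Delta\mu^n=[\mu(\mu\otimes 1)\cdots(\mu\otimes 1^{\otimes n-2})\otimes\mu^n+\mu^n\otimes\mu(1\otimes\mu)\cdots(1^{\otimes n-2}\otimes\mu)]\sigma_{2,n}\Delta^{\otimes n}$. A linear deformation is one in which the deformed structure maps are polynomials of degree at most 1 in $t$ (here only $\mu^n_t=t\mu_1^n$ is added). *)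

theory Defs
  imports Main "HOL-Computational_Algebra.Formal_Power_Series"
begin

text \<open>
A graded module is given by a homogeneous basis indexed by a type 'b with a
degree function deg :: 'b => int.  The tensor power of order m has as basis the words
(lists) of basis elements of length m, of degree the sum of the degrees.  A linear map from
the i-th to the j-th tensor power is represented by its matrix f w u (coefficient of the output
basis word u in the image of the input basis word w).  Over the field k the scalars are of
type 'k; the k[[t]]-linear extensions have matrix entries in 'k fps.
\<close>

type_synonym ('b, 'r) lmap = "'b list \<Rightarrow> 'b list \<Rightarrow> 'r"

definition degw :: "('b \<Rightarrow> int) \<Rightarrow> 'b list \<Rightarrow> int" where
  "degw deg w = sum_list (map deg w)"

definition ksign :: "int \<Rightarrow> 'r::comm_ring_1" where
  "ksign k = (if even k then 1 else - 1)"

definition is_hom :: "('b \<Rightarrow> int) \<Rightarrow> int \<Rightarrow> nat \<Rightarrow> nat \<Rightarrow> ('b, 'r::comm_ring_1) lmap \<Rightarrow> bool" where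
  "is_hom deg p i j f \<longleftrightarrow>
     (\<forall>w u. f w u \<noteq> 0 \<longrightarrow> length w = i \<and> length u = j \<and> degw deg u = degw deg w + p) \<and>
     (\<forall>w. finite {u. f w u \<noteq> 0})"

definition lzero :: "('b, 'r::comm_ring_1) lmap" where
  "lzero = (\<lambda>w u. 0)"

definition ladd :: "('b, 'r::comm_ring_1) lmap \<Rightarrow> ('b, 'r) lmap \<Rightarrow> ('b, 'r) lmap" where
  "ladd f g = (\<lambda>w u. f w u + g w u)"

definition lsub :: "('b, 'r::comm_ring_1) lmap \<Rightarrow> ('b, 'r) lmap \<Rightarrow> ('b, 'r) lmap" where
  "lsub f g = (\<lambda>w u. f w u - g w u)"

definition lscale :: "'r::comm_ring_1 \<Rightarrow> ('b, 'r) lmap \<Rightarrow> ('b, 'r) lmap" where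
  "lscale c f = (\<lambda>w u. c * f w u)"

definition lsum :: "'i set \<Rightarrow> ('i \<Rightarrow> ('b, 'r::comm_ring_1) lmap) \<Rightarrow> ('b, 'r) lmap" where
  "lsum I F = (\<lambda>w u. \<Sum>x\<in>I. F x w u)"

text \<open>Composition: lcomp g f is g o f (f applied first).\<close>
definition lcomp :: "('b, 'r::comm_ring_1) lmap \<Rightarrow> ('b, 'r) lmap \<Rightarrow> ('b, 'r) lmap" where
  "lcomp g f = (\<lambda>w u. \<Sum>v\<in>{v. f w v \<noteq> 0}. f w v * g v u)"

definition idm :: "nat \<Rightarrow> ('b, 'r::comm_ring_1) lmap" where
  "idm m = (\<lambda>w u. if w = u \<and> length w = m then 1 else 0)"

text \<open>Tensor product of maps with the Koszul sign convention
  (f \<otimes> g)(x \<otimes> y) = (-1)^(|g| |x|) f(x) \<otimes> g(y);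
  f goes from the i1-th to the j1-th tensor power, pg is the degree of g.\<close>
definition ltens :: "('b \<Rightarrow> int) \<Rightarrow> nat \<Rightarrow> nat \<Rightarrow> ('b, 'r::comm_ring_1) lmap \<Rightarrow> int \<Rightarrow> ('b, 'r) lmap
     \<Rightarrow> ('b, 'r) lmap" where
  "ltens deg i1 j1 f pg g = (\<lambda>w u.
      ksign (pg * degw deg (take i1 w)) * f (take i1 w) (take j1 u) * g (drop i1 w) (drop j1 u))"

definition place :: "('b \<Rightarrow> int) \<Rightarrow> nat \<Rightarrow> nat \<Rightarrow> ('b, 'r::comm_ring_1) lmap \<Rightarrow> nat \<Rightarrow> nat \<Rightarrow> int
     \<Rightarrow> ('b, 'r) lmap" where
  "place deg l m g a b pg = ltens deg l l (idm l) pg (ltens deg a b g 0 (idm m))"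

fun tpow :: "('b \<Rightarrow> int) \<Rightarrow> nat \<Rightarrow> nat \<Rightarrow> ('b, 'r::comm_ring_1) lmap \<Rightarrow> nat \<Rightarrow> ('b, 'r) lmap" where
  "tpow deg a b g 0 = idm 0"
| "tpow deg a b g (Suc m) = ltens deg a b g 0 (tpow deg a b g m)"

text \<open>Permutation of tensor factors with Koszul sign: output position k receives input
  position prm k (prm a permutation of the positions below N).\<close>
definition permap :: "('b \<Rightarrow> int) \<Rightarrow> nat \<Rightarrow> (nat \<Rightarrow> nat) \<Rightarrow> ('b, 'r::comm_ring_1) lmap" where
  "permap deg N prm = (\<lambda>w u.
     if length w = N \<and> u = map (\<lambda>k. w ! prm k) [0..<N]
     then ksign (\<Sum>(k, l)\<in>{(k, l). k < l \<and> l < N \<and> prm l < prm k}. deg (w ! prm k) * deg (w ! prm l))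
     else 0)"

text \<open>sigma_{r,s} : (H^{\<otimes> r})^{\<otimes> s} \<rightarrow> (H^{\<otimes> s})^{\<otimes> r}.  Input position a*r+b (a<s, b<r)
  goes to output position b*s+a.\<close>
definition sigma :: "('b \<Rightarrow> int) \<Rightarrow> nat \<Rightarrow> nat \<Rightarrow> ('b, 'r::comm_ring_1) lmap" where
  "sigma deg r s = permap deg (r * s) (\<lambda>k. (k mod s) * r + k div s)"

fun muL :: "('b \<Rightarrow> int) \<Rightarrow> ('b, 'r::comm_ring_1) lmap \<Rightarrow> nat \<Rightarrow> ('b, 'r) lmap" where
  "muL deg mu 0 = lzero"
| "muL deg mu (Suc 0) = idm 1"
| "muL deg mu (Suc (Suc m)) = lcomp (muL deg mu (Suc m)) (ltens deg 2 1 mu 0 (idm m))"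

fun muR :: "('b \<Rightarrow> int) \<Rightarrow> ('b, 'r::comm_ring_1) lmap \<Rightarrow> nat \<Rightarrow> ('b, 'r) lmap" where
  "muR deg mu 0 = lzero"
| "muR deg mu (Suc 0) = idm 1"
| "muR deg mu (Suc (Suc m)) = lcomp (muR deg mu (Suc m)) (ltens deg m m (idm m) 0 mu)"

fun dIter :: "('b \<Rightarrow> int) \<Rightarrow> ('b, 'r::comm_ring_1) lmap \<Rightarrow> nat \<Rightarrow> ('b, 'r) lmap" where
  "dIter deg Delta 0 = lzero"
| "dIter deg Delta (Suc 0) = idm 1"
| "dIter deg Delta (Suc (Suc m)) = lcomp (ltens deg 1 2 Delta 0 (idm m)) (dIter deg Delta (Suc m))"

text \<open>Bimodule structure on H^{\<otimes> j}: left / right actions.\<close>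
definition lam_act :: "('b \<Rightarrow> int) \<Rightarrow> ('b, 'r::comm_ring_1) lmap \<Rightarrow> ('b, 'r) lmap \<Rightarrow> nat \<Rightarrow> ('b, 'r) lmap" where
  "lam_act deg mu Delta j =
     lcomp (tpow deg 2 1 mu j) (lcomp (sigma deg j 2) (ltens deg 1 j (dIter deg Delta j) 0 (idm j)))"

definition rho_act :: "('b \<Rightarrow> int) \<Rightarrow> ('b, 'r::comm_ring_1) lmap \<Rightarrow> ('b, 'r) lmap \<Rightarrow> nat \<Rightarrow> ('b, 'r) lmap" where
  "rho_act deg mu Delta j =
     lcomp (tpow deg 2 1 mu j) (lcomp (sigma deg j 2) (ltens deg j j (idm j) 0 (dIter deg Delta j)))"

text \<open>Bicomodule structure on H^{\<otimes> i}: left / right coactions.\<close>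
definition lam_co :: "('b \<Rightarrow> int) \<Rightarrow> ('b, 'r::comm_ring_1) lmap \<Rightarrow> ('b, 'r) lmap \<Rightarrow> nat \<Rightarrow> ('b, 'r) lmap" where
  "lam_co deg mu Delta i =
     lcomp (ltens deg i 1 (muL deg mu i) 0 (idm i)) (lcomp (sigma deg 2 i) (tpow deg 1 2 Delta i))"

definition rho_co :: "('b \<Rightarrow> int) \<Rightarrow> ('b, 'r::comm_ring_1) lmap \<Rightarrow> ('b, 'r) lmap \<Rightarrow> nat \<Rightarrow> ('b, 'r) lmap" where
  "rho_co deg mu Delta i =
     lcomp (ltens deg i i (idm i) 0 (muL deg mu i)) (lcomp (sigma deg 2 i) (tpow deg 1 2 Delta i))"

definition d_k :: "('b \<Rightarrow> int) \<Rightarrow> ('b, 'r::comm_ring_1) lmap \<Rightarrow> nat \<Rightarrow> ('b, 'r) lmap" where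
  "d_k deg d k = lsum {0..<k} (\<lambda>l. place deg l (k - l - 1) d 1 1 1)"

definition partial_k :: "('b \<Rightarrow> int) \<Rightarrow> ('b, 'r::comm_ring_1) lmap \<Rightarrow> nat \<Rightarrow> ('b, 'r) lmap" where
  "partial_k deg mu k = lsum {0..<k} (\<lambda>l. lscale (ksign (int l)) (place deg l (k - l - 1) mu 2 1 0))"

definition delta_k :: "('b \<Rightarrow> int) \<Rightarrow> ('b, 'r::comm_ring_1) lmap \<Rightarrow> nat \<Rightarrow> ('b, 'r) lmap" where
  "delta_k deg Delta k = lsum {0..<k} (\<lambda>l. lscale (ksign (int l)) (place deg l (k - l - 1) Delta 1 2 0))"

definition GS_d :: "('b \<Rightarrow> int) \<Rightarrow> ('b, 'r::comm_ring_1) lmap \<Rightarrow> int \<Rightarrow> nat \<Rightarrow> nat \<Rightarrow> ('b, 'r) lmap \<Rightarrow> ('b, 'r) lmap" where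
  "GS_d deg d p i j f = lsub (lcomp (d_k deg d j) f) (lscale (ksign p) (lcomp f (d_k deg d i)))"

definition GS_partial :: "('b \<Rightarrow> int) \<Rightarrow> ('b, 'r::comm_ring_1) lmap \<Rightarrow> ('b, 'r) lmap
    \<Rightarrow> int \<Rightarrow> nat \<Rightarrow> nat \<Rightarrow> ('b, 'r) lmap \<Rightarrow> ('b, 'r) lmap" where
  "GS_partial deg mu Delta p i j f =
     lsub (lsub (lcomp (lam_act deg mu Delta j) (ltens deg 1 1 (idm 1) p f))
                (lcomp f (partial_k deg mu i)))
          (lscale (ksign (int i)) (lcomp (rho_act deg mu Delta j) (ltens deg i j f 0 (idm 1))))"

definition GS_delta :: "('b \<Rightarrow> int) \<Rightarrow> ('b, 'r::comm_ring_1) lmap \<Rightarrow> ('b, 'r) lmap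
    \<Rightarrow> int \<Rightarrow> nat \<Rightarrow> nat \<Rightarrow> ('b, 'r) lmap \<Rightarrow> ('b, 'r) lmap" where
  "GS_delta deg mu Delta p i j f =
     lsub (lsub (lcomp (ltens deg 1 1 (idm 1) p f) (lam_co deg mu Delta i))
                (lcomp (delta_k deg Delta j) f))
          (lscale (ksign (int j)) (lcomp (ltens deg i j f 0 (idm 1)) (rho_co deg mu Delta i)))"

definition is_GS_cochain :: "('b \<Rightarrow> int) \<Rightarrow> int \<Rightarrow> (int \<Rightarrow> nat \<Rightarrow> nat \<Rightarrow> ('b, 'r::comm_ring_1) lmap) \<Rightarrow> bool" where
  "is_GS_cochain deg r c \<longleftrightarrow>
     (\<forall>p i j. c p i j \<noteq> lzero \<longrightarrow> p + int i + int j = r + 1 \<and> i \<ge> 1 \<and> j \<ge> 1) \<and>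
     (\<forall>p i j. is_hom deg p i j (c p i j)) \<and>
     finite {(p, i, j). c p i j \<noteq> lzero}"

text \<open>Total differential D = (-1)^{i+j} d + \<partial> + (-1)^i \<delta> (signs from the source tridegree).\<close>
definition GS_D :: "('b \<Rightarrow> int) \<Rightarrow> ('b, 'r::comm_ring_1) lmap \<Rightarrow> ('b, 'r) lmap \<Rightarrow> ('b, 'r) lmap
    \<Rightarrow> (int \<Rightarrow> nat \<Rightarrow> nat \<Rightarrow> ('b, 'r) lmap) \<Rightarrow> (int \<Rightarrow> nat \<Rightarrow> nat \<Rightarrow> ('b, 'r) lmap)" where
  "GS_D deg d mu Delta c = (\<lambda>p i j.
     ladd (ladd (lscale (ksign (int i + int j)) (GS_d deg d (p - 1) i j (c (p - 1) i j)))
                (if i \<ge> 1 then GS_partial deg mu Delta p (i - 1) j (c p (i - 1) j) else lzero))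
          (if j \<ge> 1 then lscale (ksign (int i)) (GS_delta deg mu Delta p i (j - 1) (c p i (j - 1)))
           else lzero))"

definition single_cochain :: "int \<Rightarrow> nat \<Rightarrow> nat \<Rightarrow> ('b, 'r::comm_ring_1) lmap
    \<Rightarrow> (int \<Rightarrow> nat \<Rightarrow> nat \<Rightarrow> ('b, 'r) lmap)" where
  "single_cochain p i j f = (\<lambda>p' i' j'. if p' = p \<and> i' = i \<and> j' = j then f else lzero)"

definition is_GS_2cocycle :: "('b \<Rightarrow> int) \<Rightarrow> ('b, 'r::comm_ring_1) lmap \<Rightarrow> ('b, 'r) lmap \<Rightarrow> ('b, 'r) lmap
    \<Rightarrow> (int \<Rightarrow> nat \<Rightarrow> nat \<Rightarrow> ('b, 'r) lmap) \<Rightarrow> bool" where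
  "is_GS_2cocycle deg d mu Delta c \<longleftrightarrow>
     is_GS_cochain deg 2 c \<and> GS_D deg d mu Delta c = (\<lambda>p i j. lzero)"

text \<open>Connected DG bialgebra (H, d, mu, Delta) with some unit eta and counit eps.
  H^{\<otimes> 0} is the ground ring with basis the empty word.\<close>
definition dg_bialgebra :: "('b \<Rightarrow> int) \<Rightarrow> ('b, 'r::comm_ring_1) lmap \<Rightarrow> ('b, 'r) lmap \<Rightarrow> ('b, 'r) lmap \<Rightarrow> bool" where
  "dg_bialgebra deg d mu Delta \<longleftrightarrow> (\<exists>eta eps.
     is_hom deg 1 1 1 d \<and> is_hom deg 0 2 1 mu \<and> is_hom deg 0 1 2 Delta \<and>
     is_hom deg 0 0 1 eta \<and> is_hom deg 0 1 0 eps \<and>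
     lcomp d d = lzero \<and>
     lcomp mu (ltens deg 2 1 mu 0 (idm 1)) = lcomp mu (ltens deg 1 1 (idm 1) 0 mu) \<and>
     lcomp mu (ltens deg 0 1 eta 0 (idm 1)) = idm 1 \<and>
     lcomp mu (ltens deg 1 1 (idm 1) 0 eta) = idm 1 \<and>
     lcomp (ltens deg 1 2 Delta 0 (idm 1)) Delta = lcomp (ltens deg 1 1 (idm 1) 0 Delta) Delta \<and>
     lcomp (ltens deg 1 0 eps 0 (idm 1)) Delta = idm 1 \<and>
     lcomp (ltens deg 1 1 (idm 1) 0 eps) Delta = idm 1 \<and>
     lcomp d mu = lcomp mu (d_k deg d 2) \<and>
     lcomp Delta d = lcomp (d_k deg d 2) Delta \<and>
     lcomp d eta = lzero \<and> lcomp eps d = lzero \<and>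
     lcomp Delta mu = lcomp (ltens deg 2 1 mu 0 mu) (lcomp (sigma deg 2 2) (ltens deg 1 2 Delta 0 Delta)) \<and>
     lcomp Delta eta = ltens deg 0 1 eta 0 eta \<and>
     lcomp eps mu = ltens deg 1 0 eps 0 eps \<and>
     lcomp eps eta = idm 0)"

definition connected_dg_bialgebra :: "('b \<Rightarrow> int) \<Rightarrow> ('b, 'k::field) lmap \<Rightarrow> ('b, 'k) lmap \<Rightarrow> ('b, 'k) lmap \<Rightarrow> bool" where
  "connected_dg_bialgebra deg d mu Delta \<longleftrightarrow>
     dg_bialgebra deg d mu Delta \<and> (\<forall>b. deg b \<ge> 0) \<and> card {b. deg b = 0} = 1"

definition mu_family :: "nat \<Rightarrow> ('b, 'r::comm_ring_1) lmap \<Rightarrow> ('b, 'r) lmap \<Rightarrow> ('b, 'r) lmap \<Rightarrow> nat \<Rightarrow> ('b, 'r) lmap" where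
  "mu_family n d mu mun k = (if k = 1 then d else if k = 2 then mu else if k = n then mun else lzero)"

definition An_algebra :: "('b \<Rightarrow> int) \<Rightarrow> nat \<Rightarrow> ('b, 'r::comm_ring_1) lmap \<Rightarrow> ('b, 'r) lmap \<Rightarrow> ('b, 'r) lmap \<Rightarrow> bool" where
  "An_algebra deg n d mu mun \<longleftrightarrow>
     is_hom deg 1 1 1 d \<and> is_hom deg 0 2 1 mu \<and> is_hom deg (2 - int n) n 1 mun \<and>
     (\<forall>k. 1 \<le> k \<and> k < n + 1 \<longrightarrow>
        lsum {0..<k} (\<lambda>j. lsum {0..<k - j} (\<lambda>i.
           lscale (ksign (int j * (int i + 1)))
             (lcomp (mu_family n d mu mun (k - j))
                    (place deg i (k - j - 1 - i) (mu_family n d mu mun (j + 1)) (j + 1) 1 (1 - int j)))))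
        = lzero)"

definition dg_coalgebra :: "('b \<Rightarrow> int) \<Rightarrow> ('b, 'r::comm_ring_1) lmap \<Rightarrow> ('b, 'r) lmap \<Rightarrow> bool" where
  "dg_coalgebra deg d Delta \<longleftrightarrow>
     is_hom deg 1 1 1 d \<and> is_hom deg 0 1 2 Delta \<and>
     lcomp d d = lzero \<and>
     lcomp (ltens deg 1 2 Delta 0 (idm 1)) Delta = lcomp (ltens deg 1 1 (idm 1) 0 Delta) Delta \<and>
     lcomp Delta d = lcomp (d_k deg d 2) Delta"

definition hopf_An :: "('b \<Rightarrow> int) \<Rightarrow> nat \<Rightarrow> ('b, 'r::comm_ring_1) lmap \<Rightarrow> ('b, 'r) lmap \<Rightarrow> ('b, 'r) lmap
    \<Rightarrow> ('b, 'r) lmap \<Rightarrow> bool" where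
  "hopf_An deg n d mu Delta mun \<longleftrightarrow>
     n \<ge> 3 \<and> dg_coalgebra deg d Delta \<and> An_algebra deg n d mu mun \<and>
     lcomp Delta mun =
       lcomp (ladd (ltens deg n 1 (muL deg mu n) (2 - int n) mun) (ltens deg n 1 mun 0 (muR deg mu n)))
             (lcomp (sigma deg 2 n) (tpow deg 1 2 Delta n))"

definition text_ext :: "('b, 'k::field) lmap \<Rightarrow> ('b, 'k fps) lmap" where
  "text_ext f = (\<lambda>w u. fps_const (f w u))"

definition lin_in_t :: "('b, 'k::field fps) lmap \<Rightarrow> bool" where
  "lin_in_t f \<longleftrightarrow> (\<forall>w u m. m \<ge> 2 \<longrightarrow> fps_nth (f w u) m = 0)"

definition reduces_to :: "('b, 'k::field fps) lmap \<Rightarrow> ('b, 'k fps) lmap \<Rightarrow> bool" where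
  "reduces_to ft f0 \<longleftrightarrow> (\<forall>w u. fps_nth (ft w u) 0 = fps_nth (f0 w u) 0)"

definition linear_deformation_hopf_An :: "('b \<Rightarrow> int) \<Rightarrow> nat
    \<Rightarrow> ('b, 'k::field fps) lmap \<Rightarrow> ('b, 'k fps) lmap \<Rightarrow> ('b, 'k fps) lmap \<Rightarrow> ('b, 'k fps) lmap
    \<Rightarrow> ('b, 'k fps) lmap \<Rightarrow> ('b, 'k fps) lmap \<Rightarrow> ('b, 'k fps) lmap \<Rightarrow> ('b, 'k fps) lmap \<Rightarrow> bool" where
  "linear_deformation_hopf_An deg n d0 mu0 Delta0 mun0 dt mut Deltat munt \<longleftrightarrow>
     hopf_An deg n d0 mu0 Delta0 mun0 \<and> hopf_An deg n dt mut Deltat munt \<and>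
     lin_in_t dt \<and> lin_in_t mut \<and> lin_in_t Deltat \<and> lin_in_t munt \<and>
     reduces_to dt d0 \<and> reduces_to mut mu0 \<and> reduces_to Deltat Delta0 \<and> reduces_to munt mun0"

end

theory Submission
  imports Defs
begin

text \<open>
  For a cochain concentrated in the tridegree (2 - n, n, 1) the d-, \<partial>- and \<delta>-parts of the
  Gerstenhaber-Schack differential land in three different tridegrees, so D(mu_1^n) = 0 says that
  each of them vanishes separately.  The d-part states that mu_1^n commutes with d up to the Koszul
  sign, and this is the only Stasheff relation of arity at most n involving mu^n; the others are
  d^2 = 0, the Leibniz rule and associativity.  The \<delta>-part states
  Delta mu_1^n = (1 \<otimes> mu_1^n) lambda_n + (mu_1^n \<otimes> 1) rho_n; since the coactions are built
  from iterated products of mu, this is the Hopf compatibility once associativity identifies the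
  left and right iterated products.  Both equations are linear in mu_1^n and commute with extension
  of scalars, so they persist for t mu_1^n over k[[t]].
\<close>

subsection \<open>Algebra of matrices with finite rows\<close>

text \<open>lcomp sums over the support of a row; its algebraic laws need finitely supported rows.\<close>

definition row_finite :: "('b, 'r::comm_ring_1) lmap \<Rightarrow> bool" where
  "row_finite f \<longleftrightarrow> (\<forall>w. finite {u. f w u \<noteq> 0})"

lemma ksign_add: "ksign (a + b) = (ksign a * ksign b :: 'r::comm_ring_1)"
  by (auto simp: ksign_def)

lemma ksign_0 [simp]: "ksign 0 = 1"
  by (simp add: ksign_def)

lemma ksign_1 [simp]: "ksign 1 = -1"
  by (simp add: ksign_def)

lemma ksign_mult_cancel: "ksign k * x = (0::'r::comm_ring_1) \<longleftrightarrow> x = 0"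
  by (simp add: ksign_def)

lemma lzero_apply [simp]: "lzero w u = 0"
  by (simp add: lzero_def)

lemma lcomp_lzero_right [simp]: "lcomp g lzero = lzero"
  by (simp add: lcomp_def lzero_def)

lemma lcomp_lzero_left [simp]: "lcomp lzero f = lzero"
  by (simp add: lcomp_def lzero_def)

lemma ltens_lzero_left [simp]: "ltens deg a b lzero q h = lzero"
  by (simp add: ltens_def lzero_def)

lemma ltens_lzero_right [simp]: "ltens deg a b g q lzero = lzero"
  by (simp add: ltens_def lzero_def)

lemma place_lzero [simp]: "place deg l m lzero a b q = lzero"
  by (simp add: place_def)

lemma lscale_lzero [simp]: "lscale c lzero = lzero"
  by (simp add: lscale_def lzero_def)

lemma lsum_lzero [simp]: "lsum I (\<lambda>i. lzero) = lzero"
  by (simp add: lsum_def lzero_def)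

lemma lsub_eq_lzero_iff: "lsub f g = lzero \<longleftrightarrow> f = g"
  by (simp add: lsub_def lzero_def fun_eq_iff)

lemma lscale_ksign_eq_lzero_iff: "lscale (ksign k) f = lzero \<longleftrightarrow> f = lzero"
  by (simp add: lscale_def lzero_def fun_eq_iff ksign_mult_cancel)

lemma ladd_lzero [simp]: "ladd f lzero = f" "ladd lzero f = f"
  by (simp_all add: ladd_def lzero_def)

lemma lcomp_ladd_left: "lcomp (ladd g h) f = ladd (lcomp g f) (lcomp h f)"
  by (simp add: lcomp_def ladd_def fun_eq_iff sum.distrib algebra_simps)

lemma lcomp_lscale_left: "lcomp (lscale c g) f = lscale c (lcomp g f)"
  by (simp add: lcomp_def lscale_def fun_eq_iff sum_distrib_left mult_ac)

lemma lcomp_lscale_right: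
  fixes c :: "'a::idom"
  assumes "c \<noteq> 0"
  shows "lcomp g (lscale c f) = lscale c (lcomp g f)"
  using assms by (simp add: lcomp_def lscale_def fun_eq_iff sum_distrib_left mult.assoc)

lemma ltens_lscale_left: "ltens deg a b (lscale c g) q h = lscale c (ltens deg a b g q h)"
  by (simp add: ltens_def lscale_def fun_eq_iff mult_ac)

lemma ltens_lscale_right: "ltens deg a b g q (lscale c h) = lscale c (ltens deg a b g q h)"
  by (simp add: ltens_def lscale_def fun_eq_iff mult_ac)

lemma lsub_lscale: "lsub (lscale c f) (lscale c g) = lscale c (lsub f g)"
  by (simp add: lsub_def lscale_def fun_eq_iff algebra_simps)

lemma lscale_lscale_commute: "lscale a (lscale b f) = lscale b (lscale a f)"
  by (simp add: lscale_def fun_eq_iff mult_ac)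

lemma lcomp_eq_sum_superset:
  assumes "finite S" "{v. f w v \<noteq> 0} \<subseteq> S"
  shows "lcomp g f w u = (\<Sum>v\<in>S. f w v * g v u)"
  unfolding lcomp_def by (rule sum.mono_neutral_left) (use assms in auto)

lemma lcomp_eq_single:
  assumes "finite {v. f w v \<noteq> 0}" "\<And>v. f w v \<noteq> 0 \<Longrightarrow> g v u \<noteq> 0 \<Longrightarrow> v = v0"
  shows "lcomp g f w u = f w v0 * g v0 u"
proof -
  have "lcomp g f w u = (\<Sum>v\<in>insert v0 {v. f w v \<noteq> 0}. f w v * g v u)"
    by (rule lcomp_eq_sum_superset) (use assms in auto)
  also have "\<dots> = (\<Sum>v\<in>{v0}. f w v * g v u)"
    by (rule sum.mono_neutral_right) (use assms(1) in \<open>auto dest: assms(2)\<close>)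
  finally show ?thesis
    by simp
qed

lemma row_finite_if_is_hom: "is_hom deg p i j f \<Longrightarrow> row_finite f"
  by (simp add: is_hom_def row_finite_def)

lemma lcomp_support:
  "{u. lcomp g f w u \<noteq> 0} \<subseteq> (\<Union>v\<in>{v. f w v \<noteq> 0}. {u. g v u \<noteq> 0})"
proof
  fix u
  assume "u \<in> {u. lcomp g f w u \<noteq> 0}"
  then obtain v where "f w v \<noteq> 0" "f w v * g v u \<noteq> 0"
    unfolding lcomp_def using sum.not_neutral_contains_not_neutral by force
  then show "u \<in> (\<Union>v\<in>{v. f w v \<noteq> 0}. {u. g v u \<noteq> 0})"
    by auto
qed

lemma row_finite_lcomp:
  assumes "row_finite f" "row_finite g"
  shows "row_finite (lcomp g f)"
  using assms by (auto simp: row_finite_def intro: finite_subset [OF lcomp_support])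

lemma row_finite_ltens:
  assumes g: "row_finite g" and h: "row_finite h"
  shows "row_finite (ltens deg a b g q h)"
  unfolding row_finite_def
proof
  fix w
  let ?S = "(\<lambda>(x, y). x @ y) ` ({x. g (take a w) x \<noteq> 0} \<times> {y. h (drop a w) y \<noteq> 0})"
  have "{u. ltens deg a b g q h w u \<noteq> 0} \<subseteq> ?S"
  proof
    fix u
    assume "u \<in> {u. ltens deg a b g q h w u \<noteq> 0}"
    then have "g (take a w) (take b u) \<noteq> 0" "h (drop a w) (drop b u) \<noteq> 0"
      by (auto simp: ltens_def)
    then show "u \<in> ?S"
      by (intro image_eqI[where x = "(take b u, drop b u)"]) auto
  qed
  moreover have "finite ?S"
    using g h by (auto simp: row_finite_def)
  ultimately show "finite {u. ltens deg a b g q h w u \<noteq> 0}"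
    by (rule finite_subset)
qed

lemma row_finite_idm: "row_finite (idm m)"
proof -
  have "{u. idm m w u \<noteq> 0} \<subseteq> {w}" for w
    by (auto simp: idm_def)
  then show ?thesis
    unfolding row_finite_def using finite_subset by blast
qed

lemma row_finite_place: "row_finite g \<Longrightarrow> row_finite (place deg l m g a b q)"
  by (simp add: place_def row_finite_ltens row_finite_idm)

lemma row_finite_tpow: "row_finite g \<Longrightarrow> row_finite (tpow deg a b g m)"
  by (induct m) (auto simp: row_finite_idm row_finite_ltens)

lemma row_finite_sigma: "row_finite (sigma deg r s)"
proof -
  have "{u. sigma deg r s w u \<noteq> 0} \<subseteq> {map (\<lambda>k. w ! ((k mod s) * r + k div s)) [0..<r * s]}" for w
    by (auto simp: sigma_def permap_def)
  then show ?thesis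
    unfolding row_finite_def using finite_subset by blast
qed

lemma lcomp_assoc:
  assumes f: "row_finite f" and h: "row_finite h"
  shows "lcomp g (lcomp f h) = lcomp (lcomp g f) h"
proof (intro ext)
  fix w u
  define S where "S = {x. h w x \<noteq> 0}"
  define V where "V = (\<Union>x\<in>S. {v. f x v \<noteq> 0})"
  have "finite S"
    using h by (simp add: row_finite_def S_def)
  then have "finite V"
    using f by (simp add: row_finite_def V_def)
  have "{v. lcomp f h w v \<noteq> 0} \<subseteq> V"
    using lcomp_support [of f h w] by (simp add: V_def S_def)
  with \<open>finite V\<close> have "lcomp g (lcomp f h) w u = (\<Sum>v\<in>V. lcomp f h w v * g v u)"
    by (rule lcomp_eq_sum_superset)
  also have "\<dots> = (\<Sum>v\<in>V. \<Sum>x\<in>S. h w x * f x v * g v u)"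
    by (simp add: lcomp_def S_def sum_distrib_right)
  also have "\<dots> = (\<Sum>x\<in>S. \<Sum>v\<in>V. h w x * f x v * g v u)"
    by (rule sum.swap)
  also have "\<dots> = (\<Sum>x\<in>S. h w x * lcomp g f x u)"
  proof (rule sum.cong [OF refl])
    fix x
    assume "x \<in> S"
    then have "lcomp g f x u = (\<Sum>v\<in>V. f x v * g v u)"
      by (intro lcomp_eq_sum_superset [OF \<open>finite V\<close>]) (auto simp: V_def)
    then show "(\<Sum>v\<in>V. h w x * f x v * g v u) = h w x * lcomp g f x u"
      by (simp add: sum_distrib_left mult.assoc)
  qed
  also have "\<dots> = lcomp (lcomp g f) h w u"
    by (simp add: lcomp_def S_def)
  finally show "lcomp g (lcomp f h) w u = lcomp (lcomp g f) h w u" .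
qed

lemma lcomp_lsum_right:
  assumes "finite I" "\<And>i. i \<in> I \<Longrightarrow> row_finite (F i)"
  shows "lcomp g (lsum I F) = lsum I (\<lambda>i. lcomp g (F i))"
proof (intro ext)
  fix w u
  define V where "V = (\<Union>i\<in>I. {v. F i w v \<noteq> 0})"
  have "finite V"
    using assms by (auto simp: V_def row_finite_def)
  have "{v. lsum I F w v \<noteq> 0} \<subseteq> V"
  proof
    fix v
    assume "v \<in> {v. lsum I F w v \<noteq> 0}"
    then obtain i where "i \<in> I" "F i w v \<noteq> 0"
      unfolding lsum_def using sum.not_neutral_contains_not_neutral by force
    then show "v \<in> V"
      by (auto simp: V_def)
  qed
  with \<open>finite V\<close> have "lcomp g (lsum I F) w u = (\<Sum>v\<in>V. lsum I F w v * g v u)"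
    by (rule lcomp_eq_sum_superset)
  also have "\<dots> = (\<Sum>v\<in>V. \<Sum>i\<in>I. F i w v * g v u)"
    by (simp add: lsum_def sum_distrib_right)
  also have "\<dots> = (\<Sum>i\<in>I. \<Sum>v\<in>V. F i w v * g v u)"
    by (rule sum.swap)
  also have "\<dots> = (\<Sum>i\<in>I. lcomp g (F i) w u)"
    by (intro sum.cong refl lcomp_eq_sum_superset [OF \<open>finite V\<close>, symmetric]) (auto simp: V_def)
  finally show "lcomp g (lsum I F) w u = lsum I (\<lambda>i. lcomp g (F i)) w u"
    by (simp add: lsum_def)
qed

subsection \<open>Homogeneous maps\<close>

lemma is_hom_lzero: "is_hom deg p i j lzero"
  by (simp add: is_hom_def lzero_def)

lemma is_hom_idm: "is_hom deg 0 m m (idm m)"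
  by (auto simp: is_hom_def idm_def row_finite_idm [unfolded row_finite_def])

lemma is_hom_lscale:
  fixes c :: "'a::idom"
  assumes "c \<noteq> 0" "is_hom deg p i j f"
  shows "is_hom deg p i j (lscale c f)"
  using assms by (simp add: is_hom_def lscale_def)

lemma degw_append: "degw deg (x @ y) = degw deg x + degw deg y"
  by (simp add: degw_def)

lemma is_hom_ltens:
  assumes g: "is_hom deg p1 a b g" and h: "is_hom deg p2 c e h"
  shows "is_hom deg (p1 + p2) (a + c) (b + e) (ltens deg a b g q h)"
proof -
  have "length w = a + c \<and> length u = b + e \<and> degw deg u = degw deg w + (p1 + p2)"
    if "ltens deg a b g q h w u \<noteq> 0" for w u
  proof -
    from that have "g (take a w) (take b u) \<noteq> 0" "h (drop a w) (drop b u) \<noteq> 0"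
      by (auto simp: ltens_def)
    with g h have "length (take a w) = a" "length (take b u) = b"
        "degw deg (take b u) = degw deg (take a w) + p1"
        "length (drop a w) = c" "length (drop b u) = e"
        "degw deg (drop b u) = degw deg (drop a w) + p2"
      unfolding is_hom_def by blast+
    then show ?thesis
      by (metis append_take_drop_id degw_append length_append add.commute add.left_commute)
  qed
  moreover have "row_finite (ltens deg a b g q h)"
    using g h by (intro row_finite_ltens row_finite_if_is_hom)
  ultimately show ?thesis
    by (auto simp: is_hom_def row_finite_def)
qed

lemma is_hom_lcomp:
  assumes f: "is_hom deg p a b f" and g: "is_hom deg q b c g"
  shows "is_hom deg (p + q) a c (lcomp g f)"
proof -
  have "length w = a \<and> length u = c \<and> degw deg u = degw deg w + (p + q)"
    if "lcomp g f w u \<noteq> 0" for w u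
  proof -
    from that obtain v where "f w v * g v u \<noteq> 0"
      unfolding lcomp_def using sum.not_neutral_contains_not_neutral by force
    then have "f w v \<noteq> 0" "g v u \<noteq> 0"
      by auto
    then show ?thesis
      using f g by (auto simp: is_hom_def)
  qed
  moreover have "row_finite (lcomp g f)"
    using f g by (intro row_finite_lcomp row_finite_if_is_hom)
  ultimately show ?thesis
    by (auto simp: is_hom_def row_finite_def)
qed

lemma is_hom_muL: "is_hom deg 0 2 1 mu \<Longrightarrow> is_hom deg 0 (Suc m) 1 (muL deg mu (Suc m))"
proof (induct m)
  case (Suc m)
  then have "is_hom deg (0 + 0) (2 + m) 1 (lcomp (muL deg mu (Suc m)) (ltens deg 2 1 mu 0 (idm m)))"
    using is_hom_ltens [OF Suc(2) is_hom_idm, of m] by (intro is_hom_lcomp) auto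
  then show ?case
    by simp
qed (simp add: is_hom_idm)

lemma ltens_idm_0_left: "ltens deg 0 0 (idm 0) q g = g"
  by (intro ext) (simp add: ltens_def idm_def degw_def)

lemma ltens_idm_0_right:
  assumes "is_hom deg p a b g"
  shows "ltens deg a b g 0 (idm 0) = g"
proof (intro ext)
  fix w u
  show "ltens deg a b g 0 (idm 0) w u = g w u"
    using assms by (cases "g w u = 0") (auto simp: ltens_def idm_def is_hom_def)
qed

lemma place_0_0: "is_hom deg p a b g \<Longrightarrow> place deg 0 0 g a b q = g"
  by (simp add: place_def ltens_idm_0_left ltens_idm_0_right)

lemma lcomp_idm_left:
  assumes "is_hom deg p a b g"
  shows "lcomp (idm b) g = g"
proof (intro ext)
  fix w u
  have "lcomp (idm b) g w u = g w u * idm b u u"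
    by (rule lcomp_eq_single)
      (use row_finite_if_is_hom [OF assms] in \<open>auto simp: row_finite_def idm_def split: if_splits\<close>)
  also have "\<dots> = g w u"
    using assms by (cases "g w u = 0") (auto simp: idm_def is_hom_def)
  finally show "lcomp (idm b) g w u = g w u" .
qed

subsection \<open>Interchange laws and the iterated products\<close>

lemma interchange_idm_ltens_left:
  fixes deg :: "'b \<Rightarrow> int"
  assumes M: "is_hom deg 0 a b M" and g: "is_hom deg q c e g"
  shows "lcomp (ltens deg b b (idm b) q g) (ltens deg a b M 0 (idm c)) = ltens deg a b M q g"
proof (intro ext)
  fix w u :: "'b list"
  let ?v = "take b u @ drop a w"
  have "lcomp (ltens deg b b (idm b) q g) (ltens deg a b M 0 (idm c)) w u =
      ltens deg a b M 0 (idm c) w ?v * ltens deg b b (idm b) q g ?v u"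
  proof (rule lcomp_eq_single)
    show "finite {v. ltens deg a b M 0 (idm c) w v \<noteq> 0}"
      using row_finite_ltens [OF row_finite_if_is_hom [OF M] row_finite_idm]
      by (simp add: row_finite_def)
  next
    fix v
    assume "ltens deg a b M 0 (idm c) w v \<noteq> 0" "ltens deg b b (idm b) q g v u \<noteq> 0"
    then have "drop b v = drop a w" "take b v = take b u"
      by (auto simp: ltens_def idm_def split: if_splits)
    then show "v = ?v"
      by (metis append_take_drop_id)
  qed
  also have "\<dots> = ltens deg a b M q g w u"
  proof (cases "length u \<ge> b")
    case True
    then have v: "take b ?v = take b u" "drop b ?v = drop a w"
      by auto
    show ?thesis
    proof (cases "M (take a w) (take b u) = 0 \<or> g (drop a w) (drop b u) = 0")
      case False
      then have "degw deg (take b u) = degw deg (take a w)" "length (drop a w) = c"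
        using M g unfolding is_hom_def by (metis add_0_right)+
      then show ?thesis
        using True unfolding ltens_def v by (simp add: idm_def)
    qed (unfold ltens_def v, auto)
  next
    case False
    then have "M (take a w) (take b u) = 0" "idm b (take b ?v) (take b u) = 0"
      using M unfolding is_hom_def idm_def by fastforce+
    then show ?thesis
      unfolding ltens_def by (metis mult_zero_left mult_zero_right)
  qed
  finally show "lcomp (ltens deg b b (idm b) q g) (ltens deg a b M 0 (idm c)) w u =
      ltens deg a b M q g w u" .
qed

lemma interchange_idm_ltens_right:
  fixes deg :: "'b \<Rightarrow> int"
  assumes g: "is_hom deg p a b g" and M: "is_hom deg q c e M"
  shows "lcomp (ltens deg a b g 0 (idm e)) (ltens deg a a (idm a) q M) = ltens deg a b g q M"
proof (intro ext)
  fix w u :: "'b list"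
  let ?v = "take a w @ drop b u"
  have "lcomp (ltens deg a b g 0 (idm e)) (ltens deg a a (idm a) q M) w u =
      ltens deg a a (idm a) q M w ?v * ltens deg a b g 0 (idm e) ?v u"
  proof (rule lcomp_eq_single)
    show "finite {v. ltens deg a a (idm a) q M w v \<noteq> 0}"
      using row_finite_ltens [OF row_finite_idm row_finite_if_is_hom [OF M]]
      by (simp add: row_finite_def)
  next
    fix v
    assume "ltens deg a a (idm a) q M w v \<noteq> 0" "ltens deg a b g 0 (idm e) v u \<noteq> 0"
    then have "take a v = take a w" "drop a v = drop b u"
      by (auto simp: ltens_def idm_def split: if_splits)
    then show "v = ?v"
      by (metis append_take_drop_id)
  qed
  also have "\<dots> = ltens deg a b g q M w u"
  proof (cases "length w \<ge> a")
    case True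
    then have v: "take a ?v = take a w" "drop a ?v = drop b u"
      by auto
    show ?thesis
    proof (cases "M (drop a w) (drop b u) = 0")
      case False
      then have "length (drop b u) = e"
        using M unfolding is_hom_def by blast
      then show ?thesis
        using True unfolding ltens_def v by (simp add: idm_def)
    qed (unfold ltens_def v, simp)
  next
    case False
    then have "g (take a w) (take b u) = 0"
      using g unfolding is_hom_def by fastforce
    then show ?thesis
      using False by (simp add: ltens_def idm_def)
  qed
  finally show "lcomp (ltens deg a b g 0 (idm e)) (ltens deg a a (idm a) q M) w u =
      ltens deg a b g q M w u" .
qed

lemma ltens_idm_ltens_idm:
  fixes deg :: "'b \<Rightarrow> int"
  shows "ltens deg a a (idm a) q (ltens deg b b (idm b) q g) = ltens deg (a + b) (a + b) (idm (a + b)) q g"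
proof (intro ext)
  fix w u :: "'b list"
  have "take (a + b) w = take (a + b) u \<longleftrightarrow>
      take a w = take a u \<and> take b (drop a w) = take b (drop a u)"
  proof
    assume "take (a + b) w = take (a + b) u"
    from arg_cong [OF this, of "take a"] arg_cong [OF this, of "drop a"]
    show "take a w = take a u \<and> take b (drop a w) = take b (drop a u)"
      by (simp add: drop_take)
  qed (simp add: take_add)
  moreover have "length (take (a + b) w) = a + b \<longleftrightarrow>
      length (take a w) = a \<and> length (take b (drop a w)) = b"
    by auto
  ultimately show "ltens deg a a (idm a) q (ltens deg b b (idm b) q g) w u =
      ltens deg (a + b) (a + b) (idm (a + b)) q g w u"
    by (auto simp: ltens_def idm_def take_add degw_append ksign_add distrib_left add.commute)
qed

lemma interchange_disjoint:
  assumes f: "is_hom deg 0 a b f" and g: "is_hom deg q c e g"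
  shows "lcomp (ltens deg (b + k) (b + k) (idm (b + k)) q g) (ltens deg a b f 0 (idm (k + c))) =
    lcomp (ltens deg a b f 0 (idm (k + e))) (ltens deg (a + k) (a + k) (idm (a + k)) q g)"
proof -
  have g': "is_hom deg q (k + c) (k + e) (ltens deg k k (idm k) q g)"
    using is_hom_ltens [OF is_hom_idm g] by simp
  have "lcomp (ltens deg (b + k) (b + k) (idm (b + k)) q g) (ltens deg a b f 0 (idm (k + c))) =
      ltens deg a b f q (ltens deg k k (idm k) q g)"
    using interchange_idm_ltens_left [OF f g'] by (simp add: ltens_idm_ltens_idm)
  also have "\<dots> = lcomp (ltens deg a b f 0 (idm (k + e))) (ltens deg (a + k) (a + k) (idm (a + k)) q g)"
    using interchange_idm_ltens_right [OF f g'] by (simp add: ltens_idm_ltens_idm)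
  finally show ?thesis .
qed

lemma muL_2: "is_hom deg 0 2 1 mu \<Longrightarrow> muL deg mu 2 = mu"
  using ltens_idm_0_right [of deg 0 2 1 mu] lcomp_idm_left [of deg 0 2 1 mu]
  by (simp add: numeral_2_eq_2)

lemma muL_rec_right:
  assumes mu: "is_hom deg 0 2 1 mu"
    and assoc: "lcomp mu (ltens deg 2 1 mu 0 (idm 1)) = lcomp mu (ltens deg 1 1 (idm 1) 0 mu)"
  shows "muL deg mu (Suc (Suc m)) = lcomp (muL deg mu (Suc m)) (ltens deg m m (idm m) 0 mu)"
proof (induct m)
  case 0
  then show ?case
    using muL_2 [OF mu] lcomp_idm_left [OF mu] by (simp add: ltens_idm_0_left numeral_2_eq_2)
next
  case (Suc m)
  let ?L = "\<lambda>j. ltens deg 2 1 mu 0 (idm j)" and ?R = "\<lambda>j. ltens deg j j (idm j) 0 mu"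
  have fin: "row_finite (?L j)" "row_finite (?R j)" for j
    by (intro row_finite_ltens row_finite_idm row_finite_if_is_hom [OF mu])+
  have swap: "lcomp (?R m) (?L (Suc m)) = lcomp (?L m) (?R (Suc m))"
  proof (cases m)
    case 0
    then show ?thesis
      using assoc ltens_idm_0_right [OF mu] by (simp add: ltens_idm_0_left)
  next
    case (Suc k)
    then show ?thesis
      using interchange_disjoint [OF mu mu, of k] by (simp add: ac_simps)
  qed
  have "muL deg mu (Suc (Suc (Suc m))) = lcomp (lcomp (muL deg mu (Suc m)) (?R m)) (?L (Suc m))"
    using Suc.hyps by simp
  also have "\<dots> = lcomp (muL deg mu (Suc m)) (lcomp (?L m) (?R (Suc m)))"
    using lcomp_assoc [OF fin(2) fin(1)] swap by metis
  also have "\<dots> = lcomp (muL deg mu (Suc (Suc m))) (?R (Suc m))"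
    using lcomp_assoc [OF fin(1) fin(2)] by simp
  finally show ?case .
qed

lemma muL_eq_muR:
  assumes mu: "is_hom deg 0 2 1 mu"
    and assoc: "lcomp mu (ltens deg 2 1 mu 0 (idm 1)) = lcomp mu (ltens deg 1 1 (idm 1) 0 mu)"
  shows "muL deg mu m = muR deg mu m"
proof -
  have "muL deg mu m = muR deg mu m \<and> muL deg mu (Suc m) = muR deg mu (Suc m)"
  proof (induct m)
    case (Suc m)
    then show ?case
      using muL_rec_right [OF mu assoc, of m] by simp
  qed simp
  then show ?thesis
    by simp
qed

subsection \<open>Stasheff relations of an A(n)-structure\<close>

definition stasheff_term :: "('b \<Rightarrow> int) \<Rightarrow> (nat \<Rightarrow> ('b, 'r::comm_ring_1) lmap) \<Rightarrow> nat \<Rightarrow> nat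
    \<Rightarrow> ('b, 'r) lmap" where
  "stasheff_term deg M k j = lsum {0..<k - j} (\<lambda>i. lscale (ksign (int j * (int i + 1)))
     (lcomp (M (k - j)) (place deg i (k - j - 1 - i) (M (j + 1)) (j + 1) 1 (1 - int j))))"

lemma An_algebra_iff_stasheff:
  "An_algebra deg n d mu mun \<longleftrightarrow>
     is_hom deg 1 1 1 d \<and> is_hom deg 0 2 1 mu \<and> is_hom deg (2 - int n) n 1 mun \<and>
     (\<forall>k. 1 \<le> k \<and> k < n + 1 \<longrightarrow>
        lsum {0..<k} (stasheff_term deg (mu_family n d mu mun) k) = lzero)"
  unfolding An_algebra_def stasheff_term_def [abs_def] by (rule refl)

lemma stasheff_term_lzero:
  "M (k - j) = lzero \<or> M (j + 1) = lzero \<Longrightarrow> stasheff_term deg M k j = lzero"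
  by (elim disjE) (simp_all add: stasheff_term_def)

lemma d_k_1: "is_hom deg p 1 1 d \<Longrightarrow> d_k deg d 1 = d"
  by (simp add: d_k_def lsum_def place_0_0)

lemma stasheff_term_first:
  assumes "is_hom deg p 1 1 (M 1)"
  shows "stasheff_term deg M k 0 = lcomp (M k) (d_k deg (M 1) k)"
proof -
  have "lcomp (M k) (d_k deg (M 1) k) = lsum {0..<k} (\<lambda>l. lcomp (M k) (place deg l (k - l - 1) (M 1) 1 1 1))"
    unfolding d_k_def
    using row_finite_if_is_hom [OF assms]
    by (intro lcomp_lsum_right) (auto intro: row_finite_place)
  then show ?thesis
    by (simp add: stasheff_term_def lscale_def)
qed

lemma stasheff_term_last:
  assumes "is_hom deg p k 1 (M k)" "k \<ge> 1"
  shows "stasheff_term deg M k (k - 1) = lscale (ksign (int k - 1)) (lcomp (M 1) (M k))"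
  using assms by (simp add: stasheff_term_def lsum_def place_0_0 of_nat_diff)

lemma stasheff_term_assoc:
  assumes "is_hom deg 0 2 1 (M 2)"
  shows "stasheff_term deg M 3 1 =
    lsub (lcomp (M 2) (ltens deg 1 1 (idm 1) 0 (M 2))) (lcomp (M 2) (ltens deg 2 1 (M 2) 0 (idm 1)))"
proof -
  have "{0..<2::nat} = {0, 1}"
    by auto
  then show ?thesis
    using ltens_idm_0_right [OF assms]
    by (simp add: stasheff_term_def lsum_def lsub_def lscale_def place_def ltens_idm_0_left
        ksign_def numeral_2_eq_2 [symmetric])
qed

lemma mu_family_lzero: "k \<noteq> 1 \<Longrightarrow> k \<noteq> 2 \<Longrightarrow> k \<noteq> n \<Longrightarrow> mu_family n d mu mun k = lzero"
  by (simp add: mu_family_def)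

text \<open>In arities 3 \<le> k \<le> n the only insertions that can survive are those of d into
  mu^k and of mu^k into d: a product mu^a \<circ> mu^b occurs in arity a + b - 1, and below
  n + 1 this needs a or b to be 1, except for the associator of mu in arity 3.\<close>

lemma stasheff_sum_mu_family:
  fixes d mu mun :: "('b, 'r::comm_ring_1) lmap"
  assumes "3 \<le> k" "k \<le> n" and mu: "is_hom deg 0 2 1 mu"
    and assoc: "lcomp mu (ltens deg 2 1 mu 0 (idm 1)) = lcomp mu (ltens deg 1 1 (idm 1) 0 mu)"
  defines "M \<equiv> mu_family n d mu mun"
  shows "lsum {0..<k} (stasheff_term deg M k) = ladd (stasheff_term deg M k 0) (stasheff_term deg M k (k - 1))"
proof -
  have "stasheff_term deg M k j = lzero" if j: "j \<in> {0..<k} - {0, k - 1}" for j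
  proof (cases "k = 3 \<and> j = 1")
    case True
    have "M 2 = mu"
      by (simp add: M_def mu_family_def)
    then show ?thesis
      using True stasheff_term_assoc [of deg M] mu assoc by (simp add: lsub_def lzero_def)
  next
    case False
    have "M (k - j) = lzero \<or> M (j + 1) = lzero"
    proof (cases "k - j = 2")
      case True
      then have "M (j + 1) = lzero"
        using False j assms(1,2) unfolding M_def by (intro mu_family_lzero) auto
      then show ?thesis ..
    next
      case False
      then have "M (k - j) = lzero"
        using j assms(1,2) unfolding M_def by (intro mu_family_lzero) auto
      then show ?thesis ..
    qed
    then show ?thesis
      by (rule stasheff_term_lzero)
  qed
  then have "(\<Sum>j\<in>{0..<k}. stasheff_term deg M k j w u) = (\<Sum>j\<in>{0, k - 1}. stasheff_term deg M k j w u)"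
    for w u
    by (intro sum.mono_neutral_right) (use assms(1) in auto)
  then show ?thesis
    using assms(1) by (simp add: lsum_def ladd_def fun_eq_iff)
qed

lemma An_algebra_intro:
  fixes d mu mun :: "('b, 'r::comm_ring_1) lmap"
  assumes n: "n \<ge> 3"
    and hd: "is_hom deg 1 1 1 d" and hmu: "is_hom deg 0 2 1 mu" and hmun: "is_hom deg (2 - int n) n 1 mun"
    and dd: "lcomp d d = lzero"
    and dmu: "lcomp d mu = lcomp mu (d_k deg d 2)"
    and assoc: "lcomp mu (ltens deg 2 1 mu 0 (idm 1)) = lcomp mu (ltens deg 1 1 (idm 1) 0 mu)"
    and dmun: "lcomp d mun = lscale (ksign (2 - int n)) (lcomp mun (d_k deg d n))"
  shows "An_algebra deg n d mu mun"
  unfolding An_algebra_iff_stasheff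
proof (intro conjI allI impI hd hmu hmun)
  fix k
  assume k: "1 \<le> k \<and> k < n + 1"
  define M where "M = mu_family n d mu mun"
  have M1: "M 1 = d" "M (Suc 0) = d" and M2: "M 2 = mu"
    by (simp_all add: M_def mu_family_def)
  have first: "stasheff_term deg M k 0 = lcomp (M k) (d_k deg d k)"
    using stasheff_term_first [of deg 1 M k] hd by (simp add: M1)
  consider "k = 1" | "k = 2" | "3 \<le> k"
    using k by linarith
  then show "lsum {0..<k} (stasheff_term deg M k) = lzero"
  proof cases
    case 1
    then have "stasheff_term deg M k 0 = lzero"
      using first dd d_k_1 [OF hd] M1 by simp
    then show ?thesis
      using 1 by (simp add: lsum_def lzero_def)
  next
    case 2
    have "{0..<2::nat} = {0, 1}"
      by auto
    moreover have "stasheff_term deg M 2 1 = lscale (-1) (lcomp d mu)"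
      using stasheff_term_last [of deg _ 2 M] hmu by (simp add: M1 M2)
    ultimately show ?thesis
      using 2 first dmu by (simp add: lsum_def lscale_def M2 fun_eq_iff)
  next
    case 3
    have "M k = (if k = n then mun else lzero)"
      using 3 by (simp add: M_def mu_family_def)
    then have hMk: "is_hom deg (2 - int n) k 1 (M k)"
      using hmun by (simp add: is_hom_lzero)
    have "lsum {0..<k} (stasheff_term deg M k) =
        ladd (lcomp (M k) (d_k deg d k)) (lscale (ksign (int k - 1)) (lcomp d (M k)))"
      using stasheff_sum_mu_family [of k n deg mu d mun] 3 k hmu assoc first
        stasheff_term_last [of deg _ k M, OF hMk] M1 unfolding M_def by simp
    also have "\<dots> = lzero"
    proof (cases "k = n")
      case True
      then have "M k = mun"
        using \<open>M k = _\<close> by simp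
      moreover have "ksign (int n - 1) * ksign (2 - int n) = (-1::'r)"
        using ksign_add [of "int n - 1" "2 - int n"] by (simp add: eq_commute)
      ultimately show ?thesis
        using True dmun by (simp add: ladd_def lscale_def lzero_def mult.assoc [symmetric])
    qed (simp add: \<open>M k = _\<close>)
    finally show ?thesis .
  qed
qed

subsection \<open>Cocycles concentrated in one tridegree\<close>

lemma single_cochain_at [simp]: "single_cochain p i j f p i j = f"
  by (simp add: single_cochain_def)

lemma single_cochain_off:
  "(p', i', j') \<noteq> (p, i, j) \<Longrightarrow> single_cochain p i j f p' i' j' = lzero"
  by (auto simp: single_cochain_def)

lemma GS_d_lzero [simp]: "GS_d deg d p i j lzero = lzero"
  by (simp add: GS_d_def lsub_eq_lzero_iff)

lemma GS_partial_lzero [simp]: "GS_partial deg mu Delta p i j lzero = lzero"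
  by (simp add: GS_partial_def lsub_eq_lzero_iff)

lemma GS_delta_lzero [simp]: "GS_delta deg mu Delta p i j lzero = lzero"
  by (simp add: GS_delta_def lsub_eq_lzero_iff)

lemma GS_d_single_cocycle:
  assumes "is_GS_2cocycle deg d mu Delta (single_cochain p i j f)"
  shows "GS_d deg d p i j f = lzero"
proof -
  have "GS_D deg d mu Delta (single_cochain p i j f) (p + 1) i j = lzero"
    using assms by (simp add: is_GS_2cocycle_def)
  moreover have other: "single_cochain p i j f (p + 1) i' j' = lzero" for i' j'
    by (simp add: single_cochain_off)
  ultimately show ?thesis
    by (simp add: GS_D_def other lscale_ksign_eq_lzero_iff cong: if_cong)
qed

lemma GS_delta_single_cocycle:
  assumes "is_GS_2cocycle deg d mu Delta (single_cochain p i j f)"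
  shows "GS_delta deg mu Delta p i j f = lzero"
proof -
  have "GS_D deg d mu Delta (single_cochain p i j f) p i (j + 1) = lzero"
    using assms by (simp add: is_GS_2cocycle_def)
  moreover have other: "single_cochain p i j f p' i' (j + 1) = lzero" for p' i'
    by (simp add: single_cochain_off)
  ultimately show ?thesis
    by (simp add: GS_D_def other lscale_ksign_eq_lzero_iff cong: if_cong)
qed

lemma delta_k_1: "is_hom deg p 1 2 Delta \<Longrightarrow> delta_k deg Delta 1 = Delta"
  by (simp add: delta_k_def lsum_def lscale_def place_0_0)

lemma lcomp_d_eq_if_GS_d_lzero:
  assumes "is_hom deg 1 1 1 d" "GS_d deg d p i 1 f = lzero"
  shows "lcomp d f = lscale (ksign p) (lcomp f (d_k deg d i))"
  using assms d_k_1 [OF assms(1)] by (simp add: GS_d_def lsub_eq_lzero_iff)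

definition hopf_compatible :: "('b \<Rightarrow> int) \<Rightarrow> nat \<Rightarrow> ('b, 'r::comm_ring_1) lmap \<Rightarrow> ('b, 'r) lmap
    \<Rightarrow> ('b, 'r) lmap \<Rightarrow> bool" where
  "hopf_compatible deg n mu Delta mun \<longleftrightarrow>
     lcomp Delta mun =
       lcomp (ladd (ltens deg n 1 (muL deg mu n) (2 - int n) mun) (ltens deg n 1 mun 0 (muR deg mu n)))
             (lcomp (sigma deg 2 n) (tpow deg 1 2 Delta n))"

lemma hopf_An_iff:
  "hopf_An deg n d mu Delta mun \<longleftrightarrow>
     n \<ge> 3 \<and> dg_coalgebra deg d Delta \<and> An_algebra deg n d mu mun \<and> hopf_compatible deg n mu Delta mun"
  by (simp add: hopf_An_def hopf_compatible_def)

text \<open>The coactions on the tensor power are (muL \<otimes> 1) \<sigma> \<Delta>^{\<otimes> n} and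
  (1 \<otimes> muL) \<sigma> \<Delta>^{\<otimes> n}, so after the interchange laws the \<delta>-part of the
  differential becomes the Hopf compatibility.\<close>

lemma hopf_compatible_if_GS_delta_lzero:
  assumes n: "n \<ge> 1" and f: "is_hom deg (2 - int n) n 1 f"
    and mu: "is_hom deg 0 2 1 mu" and Delta: "is_hom deg 0 1 2 Delta"
    and assoc: "lcomp mu (ltens deg 2 1 mu 0 (idm 1)) = lcomp mu (ltens deg 1 1 (idm 1) 0 mu)"
    and delta: "GS_delta deg mu Delta (2 - int n) n 1 f = lzero"
  shows "hopf_compatible deg n mu Delta f"
proof -
  define S where "S = lcomp (sigma deg 2 n) (tpow deg 1 2 Delta n)"
  have "row_finite S"
    unfolding S_def by (intro row_finite_lcomp row_finite_tpow row_finite_sigma row_finite_if_is_hom [OF Delta])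
  have M: "is_hom deg 0 n 1 (muL deg mu n)"
    using is_hom_muL [OF mu, of "n - 1"] n by simp
  have fin: "row_finite (ltens deg n 1 (muL deg mu n) 0 (idm n))" "row_finite (ltens deg n n (idm n) 0 (muL deg mu n))"
    by (intro row_finite_ltens row_finite_idm row_finite_if_is_hom [OF M])+
  have "lcomp (delta_k deg Delta 1) f =
      ladd (lcomp (ltens deg 1 1 (idm 1) (2 - int n) f) (lcomp (ltens deg n 1 (muL deg mu n) 0 (idm n)) S))
        (lcomp (ltens deg n 1 f 0 (idm 1)) (lcomp (ltens deg n n (idm n) 0 (muL deg mu n)) S))"
    using delta by (simp add: GS_delta_def lam_co_def rho_co_def S_def lsub_def ladd_def lscale_def lzero_def
        fun_eq_iff algebra_simps)
  also have "\<dots> = ladd (lcomp (ltens deg n 1 (muL deg mu n) (2 - int n) f) S) (lcomp (ltens deg n 1 f 0 (muL deg mu n)) S)"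
    by (simp only: lcomp_assoc [OF fin(1) \<open>row_finite S\<close>] lcomp_assoc [OF fin(2) \<open>row_finite S\<close>]
        interchange_idm_ltens_left [OF M f] interchange_idm_ltens_right [OF f M])
  finally show ?thesis
    unfolding hopf_compatible_def S_def
    using delta_k_1 [OF Delta] by (simp add: lcomp_ladd_left muL_eq_muR [OF mu assoc])
qed

lemma hopf_An_intro:
  assumes bialg: "dg_bialgebra deg d mu Delta" and n: "n \<ge> 3"
    and hmun: "is_hom deg (2 - int n) n 1 mun"
    and GS_d: "GS_d deg d (2 - int n) n 1 mun = lzero"
    and GS_delta: "GS_delta deg mu Delta (2 - int n) n 1 mun = lzero"
  shows "hopf_An deg n d mu Delta mun"
proof -
  from bialg have hd: "is_hom deg 1 1 1 d" and hmu: "is_hom deg 0 2 1 mu"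
    and hDelta: "is_hom deg 0 1 2 Delta" and dd: "lcomp d d = lzero"
    and assoc: "lcomp mu (ltens deg 2 1 mu 0 (idm 1)) = lcomp mu (ltens deg 1 1 (idm 1) 0 mu)"
    and coassoc: "lcomp (ltens deg 1 2 Delta 0 (idm 1)) Delta = lcomp (ltens deg 1 1 (idm 1) 0 Delta) Delta"
    and dmu: "lcomp d mu = lcomp mu (d_k deg d 2)"
    and Deltad: "lcomp Delta d = lcomp (d_k deg d 2) Delta"
    unfolding dg_bialgebra_def by blast+
  have "An_algebra deg n d mu mun"
    using An_algebra_intro [OF n hd hmu hmun dd dmu assoc] lcomp_d_eq_if_GS_d_lzero [OF hd GS_d] .
  moreover have "hopf_compatible deg n mu Delta mun"
    using n by (intro hopf_compatible_if_GS_delta_lzero [OF _ hmun hmu hDelta assoc GS_delta]) simp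
  ultimately show ?thesis
    unfolding hopf_An_iff dg_coalgebra_def using n hd hDelta dd coassoc Deltad by blast
qed

subsection \<open>Extension of scalars to formal power series\<close>

lemma fps_const_sum: "fps_const (sum f S) = (\<Sum>x\<in>S. fps_const (f x))"
  by (induct S rule: infinite_finite_induct) (auto simp: fps_const_add [symmetric])

lemma fps_const_ksign: "fps_const (ksign k :: 'k::field) = ksign k"
  by (simp add: ksign_def fps_const_neg [symmetric])

lemma fps_const_inject: "fps_const a = fps_const b \<longleftrightarrow> a = (b :: 'a::group_add)"
  by (metis fps_const_eq_0_iff fps_const_sub right_minus_eq)

lemma text_ext_inject: "text_ext f = text_ext g \<longleftrightarrow> f = g"
  by (simp add: text_ext_def fun_eq_iff fps_const_inject)

lemma is_hom_text_ext_iff: "is_hom deg p i j (text_ext f) \<longleftrightarrow> is_hom deg p i j f"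
  by (simp add: is_hom_def text_ext_def)

lemma text_ext_lzero: "text_ext lzero = lzero"
  by (simp add: text_ext_def lzero_def fun_eq_iff)

lemma text_ext_idm: "text_ext (idm m) = idm m"
  by (simp add: text_ext_def idm_def fun_eq_iff)

lemma text_ext_lsub: "text_ext (lsub f g) = lsub (text_ext f) (text_ext g)"
  by (simp add: text_ext_def lsub_def fun_eq_iff)

lemma text_ext_lscale_ksign: "text_ext (lscale (ksign k) f) = lscale (ksign k) (text_ext f)"
  by (simp add: text_ext_def lscale_def fun_eq_iff fps_const_ksign [symmetric])

lemma text_ext_lsum: "text_ext (lsum I F) = lsum I (\<lambda>i. text_ext (F i))"
  by (simp add: text_ext_def lsum_def fun_eq_iff fps_const_sum)

lemma text_ext_lcomp: "text_ext (lcomp g f) = lcomp (text_ext g) (text_ext f)"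
  by (simp add: text_ext_def lcomp_def fun_eq_iff fps_const_sum)

lemma text_ext_ltens: "text_ext (ltens deg a b g q h) = ltens deg a b (text_ext g) q (text_ext h)"
  by (simp add: text_ext_def ltens_def fun_eq_iff fps_const_ksign [symmetric])

lemma text_ext_place: "text_ext (place deg l m g a b q) = place deg l m (text_ext g) a b q"
  by (simp add: place_def text_ext_ltens text_ext_idm)

lemma text_ext_tpow: "text_ext (tpow deg a b g m) = tpow deg a b (text_ext g) m"
  by (induct m) (simp_all add: text_ext_ltens text_ext_idm)

lemma text_ext_sigma: "text_ext (sigma deg r s) = sigma deg r s"
  by (simp add: text_ext_def sigma_def permap_def fun_eq_iff fps_const_ksign [symmetric])

lemma text_ext_muL: "text_ext (muL deg mu m) = muL deg (text_ext mu) m"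
proof (induct deg mu m rule: muL.induct)
  case (3 deg mu m)
  then show ?case
    by (simp add: text_ext_lcomp text_ext_ltens text_ext_idm)
qed (simp_all add: text_ext_def lzero_def idm_def fun_eq_iff)

lemmas text_ext_simps = text_ext_lzero text_ext_idm text_ext_lsub text_ext_lscale_ksign text_ext_lsum
  text_ext_lcomp text_ext_ltens text_ext_place text_ext_tpow text_ext_sigma text_ext_muL

lemma d_k_text_ext: "d_k deg (text_ext d) k = text_ext (d_k deg d k)"
  by (simp add: d_k_def text_ext_simps)

lemma delta_k_text_ext: "delta_k deg (text_ext Delta) k = text_ext (delta_k deg Delta k)"
  by (simp add: delta_k_def text_ext_simps)

lemma lam_co_text_ext: "lam_co deg (text_ext mu) (text_ext Delta) i = text_ext (lam_co deg mu Delta i)"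
  by (simp add: lam_co_def text_ext_simps)

lemma rho_co_text_ext: "rho_co deg (text_ext mu) (text_ext Delta) i = text_ext (rho_co deg mu Delta i)"
  by (simp add: rho_co_def text_ext_simps)

lemma GS_d_text_ext: "GS_d deg (text_ext d) p i j (text_ext f) = text_ext (GS_d deg d p i j f)"
  by (simp add: GS_d_def d_k_text_ext text_ext_simps)

lemma GS_delta_text_ext:
  "GS_delta deg (text_ext mu) (text_ext Delta) p i j (text_ext f) = text_ext (GS_delta deg mu Delta p i j f)"
  by (simp add: GS_delta_def delta_k_text_ext lam_co_text_ext rho_co_text_ext text_ext_simps)

lemma dg_bialgebra_text_ext:
  fixes deg :: "'b \<Rightarrow> int"
  assumes "dg_bialgebra deg d mu Delta"
  shows "dg_bialgebra deg (text_ext d) (text_ext mu) (text_ext Delta)"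
proof -
  \<comment> \<open>the typing of the first rules keeps the simplifier from rewriting the inner idm m and lzero again\<close>
  have fold: "(idm m :: ('b, 'k fps) lmap) = text_ext (idm m)" "(lzero :: ('b, 'k fps) lmap) = text_ext lzero"
    "lcomp (text_ext g) (text_ext f) = text_ext (lcomp g f)"
    "ltens deg a b (text_ext g) q (text_ext h) = text_ext (ltens deg a b g q h)"
    "d_k deg (text_ext d) k = text_ext (d_k deg d k)"
    "sigma deg r s = text_ext (sigma deg r s)"
    for m a b q r s k and f g h :: "('b, 'k::field) lmap"
    by (simp_all add: text_ext_simps d_k_text_ext)
  show ?thesis
    using assms unfolding dg_bialgebra_def
    apply (elim exE)
    subgoal for eta eps
      by (intro exI [of _ "text_ext eta"] exI [of _ "text_ext eps"])
        (simp only: fold text_ext_inject is_hom_text_ext_iff)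
    done
qed

lemma GS_d_lscale:
  fixes c :: "'a::idom"
  assumes "c \<noteq> 0"
  shows "GS_d deg d p i j (lscale c f) = lscale c (GS_d deg d p i j f)"
  using assms
  by (simp add: GS_d_def lcomp_lscale_left lcomp_lscale_right lscale_lscale_commute [of _ c] lsub_lscale)

lemma GS_delta_lscale:
  fixes c :: "'a::idom"
  assumes "c \<noteq> 0"
  shows "GS_delta deg mu Delta p i j (lscale c f) = lscale c (GS_delta deg mu Delta p i j f)"
  using assms
  by (simp add: GS_delta_def lcomp_lscale_left lcomp_lscale_right ltens_lscale_left ltens_lscale_right
      lscale_lscale_commute [of _ c] lsub_lscale)

theorem mainTheorem1:
  fixes deg :: "'b \<Rightarrow> int"
    and d mu Delta mu1n :: "('b, 'k::field) lmap"
    and n :: nat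
  assumes "n \<ge> 3"
    and "connected_dg_bialgebra deg d mu Delta"
    and "is_hom deg (2 - int n) n 1 mu1n"
    and "is_GS_2cocycle deg d mu Delta (single_cochain (2 - int n) n 1 mu1n)"
  shows "linear_deformation_hopf_An deg n
           (text_ext d) (text_ext mu) (text_ext Delta) lzero
           (text_ext d) (text_ext mu) (text_ext Delta) (\<lambda>w u. fps_X * fps_const (mu1n w u))"
proof -
  have "dg_bialgebra deg d mu Delta"
    using assms(2) by (simp add: connected_dg_bialgebra_def)
  note hopf = hopf_An_intro [OF dg_bialgebra_text_ext [OF this] assms(1)]
  have GS_d: "GS_d deg d (2 - int n) n 1 mu1n = lzero"
    using assms(4) by (rule GS_d_single_cocycle)
  have GS_delta: "GS_delta deg mu Delta (2 - int n) n 1 mu1n = lzero"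
    using assms(4) by (rule GS_delta_single_cocycle)
  have "(\<lambda>w u. fps_X * fps_const (mu1n w u)) = lscale fps_X (text_ext mu1n)"
    by (simp add: lscale_def text_ext_def)
  moreover have "hopf_An deg n (text_ext d) (text_ext mu) (text_ext Delta) lzero"
    by (rule hopf) (simp_all add: is_hom_lzero)
  moreover have "hopf_An deg n (text_ext d) (text_ext mu) (text_ext Delta) (lscale fps_X (text_ext mu1n))"
  proof (rule hopf)
    show "is_hom deg (2 - int n) n 1 (lscale fps_X (text_ext mu1n))"
      using assms(3) by (simp add: is_hom_lscale is_hom_text_ext_iff)
    show "GS_d deg (text_ext d) (2 - int n) n 1 (lscale fps_X (text_ext mu1n)) = lzero"
      using GS_d by (simp add: GS_d_lscale GS_d_text_ext text_ext_lzero)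
    show "GS_delta deg (text_ext mu) (text_ext Delta) (2 - int n) n 1 (lscale fps_X (text_ext mu1n)) = lzero"
      using GS_delta by (simp add: GS_delta_lscale GS_delta_text_ext text_ext_lzero)
  qed
  ultimately show ?thesis
    unfolding linear_deformation_hopf_An_def
    by (simp add: lin_in_t_def reduces_to_def text_ext_def lscale_def lzero_def)
qed

end
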